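(* Let $K$ be a semifield and $P$ a polygon. Let $d_1,\dots,d_m$ be pairwise non-crossing internal diagonals of $P$ dividing $P$ into subpolygons $P_1,\dots,P_{m+1}$, let $D_i$ be a dissection of $P_i$, and set $D = \{d_1,\dots,d_m\} \cup D_1 \cup \dots \cup D_{m+1}$ (a dissection of $P$). Let $f_i : \operatorname{diag}(P_i) \to K$ be a weak frieze with respect to $D_i$ for each $i$, such that $f_i(d) = f_j(d)$ whenever $P_i$ and $P_j$ share a diagonal $d$, and let $f : \operatorname{diag}(P) \to K$ be the unique weak frieze with respect to $D$ with $f|_{\operatorname{diag}(P_i)} = f_i$ for all $i$. Then $f$ is a frieze if and only if each $f_i$ is a frieze.
   Context: A semifield is a set $K$ with binary operations $+$ and $\cdot$ such that $+$ is associative and commutative, $(K,\cdot)$ is a commutative group, and $\cdot$ distributes over $+$; no subtraction is assumed. A polygon is a finite set $V$ of at least three vertices with a cyclic order. A diagonal is a two-element subset of $V$ (edges $\{\alpha,\alpha^+\}$ count as diagonals); $\operatorname{diag}(P)$ is the set of diagonals; non-edges are internal. $\{\alpha,\beta\}$ and $\{\gamma,\delta\}$ cross if $\alpha,\beta,\gamma,\delta$ are four distinct vertices appearing in the cyclic order as $\alpha,\gamma,\beta,\delta$ or $\alpha,\delta,\beta,\gamma$. A subpolygon is a subset of $V$ of at least three vertices with the induced cyclic order. A dissection is a (possibly empty) set of pairwise non-crossing internal diagonals. Write $f(\alpha,\beta):=f(\{\alpha,\beta\})$. A map $f$ on the diagonals of a polygon with values in $K$ is a frieze if it satisfies the Ptolemy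 relation $f(\alpha,\beta)f(\gamma,\delta) = f(\alpha,\gamma)f(\beta,\delta) + f(\alpha,\delta)f(\beta,\gamma)$ for all crossing diagonals $\{\alpha,\beta\}$, $\{\gamma,\delta\}$; it is a weak frieze with respect to a dissection $D$ if the Ptolemy relation holds whenever $\{\alpha,\beta\}$, $\{\gamma,\delta\}$ cross and $\{\gamma,\delta\}\in D$. (Existence and uniqueness of $f$ is known.) *)

theory Defs
  imports Main
begin

text \<open>Semifield: + associative and commutative, (K,*) a commutative group,
  * distributes over +. No zero, no subtraction.\<close>
class semifield = comm_semiring + comm_monoid_mult + inverse +
  assumes semifield_right_inverse: "a * inverse a = 1"

text \<open>Polygons: a finite set of natural numbers with at least three elements;
  its cyclic order is the one induced by the natural order on nat
  (every finite cyclic order is isomorphic to such a one).  Subpolygons are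
  subsets with the induced cyclic order, so they are again of this form.\<close>

definition polygon :: "nat set \<Rightarrow> bool" where
  "polygon V \<longleftrightarrow> finite V \<and> 3 \<le> card V"

definition diag :: "nat set \<Rightarrow> nat set set" where
  "diag V = {e. \<exists>a b. a \<in> V \<and> b \<in> V \<and> a \<noteq> b \<and> e = {a, b}}"

definition is_edge :: "nat set \<Rightarrow> nat set \<Rightarrow> bool" where
  "is_edge V e \<longleftrightarrow> (\<exists>a b. a \<in> V \<and> b \<in> V \<and> a < b \<and> e = {a, b} \<and>
      ((\<forall>x\<in>V. \<not> (a < x \<and> x < b)) \<or> (a = Min V \<and> b = Max V)))"

definition internal_diag :: "nat set \<Rightarrow> nat set set" where
  "internal_diag V = {e \<in> diag V. \<not> is_edge V e}"

definition crosses :: "nat set \<Rightarrow> nat set \<Rightarrow> bool" where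
  "crosses e1 e2 \<longleftrightarrow>
     (\<exists>a b c d. e1 = {a, b} \<and> e2 = {c, d} \<and> a < c \<and> c < b \<and> b < d) \<or>
     (\<exists>a b c d. e2 = {a, b} \<and> e1 = {c, d} \<and> a < c \<and> c < b \<and> b < d)"

definition dissection :: "nat set \<Rightarrow> nat set set \<Rightarrow> bool" where
  "dissection V D \<longleftrightarrow> D \<subseteq> internal_diag V \<and> (\<forall>e1\<in>D. \<forall>e2\<in>D. \<not> crosses e1 e2)"

definition ptolemy :: "(nat set \<Rightarrow> 'k::{plus,times}) \<Rightarrow> nat \<Rightarrow> nat \<Rightarrow> nat \<Rightarrow> nat \<Rightarrow> bool" where
  "ptolemy f a b c d \<longleftrightarrow> f {a, b} * f {c, d} = f {a, c} * f {b, d} + f {a, d} * f {b, c}"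

definition frieze :: "nat set \<Rightarrow> (nat set \<Rightarrow> 'k::semifield) \<Rightarrow> bool" where
  "frieze V f \<longleftrightarrow> (\<forall>a b c d. a \<in> V \<longrightarrow> b \<in> V \<longrightarrow> c \<in> V \<longrightarrow> d \<in> V \<longrightarrow>
      crosses {a, b} {c, d} \<longrightarrow> ptolemy f a b c d)"

definition weak_frieze :: "nat set \<Rightarrow> nat set set \<Rightarrow> (nat set \<Rightarrow> 'k::semifield) \<Rightarrow> bool" where
  "weak_frieze V D f \<longleftrightarrow> (\<forall>a b c d. a \<in> V \<longrightarrow> b \<in> V \<longrightarrow> c \<in> V \<longrightarrow> d \<in> V \<longrightarrow>
      crosses {a, b} {c, d} \<longrightarrow> {c, d} \<in> D \<longrightarrow> ptolemy f a b c d)"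

text \<open>The subpolygons into which a dissection E divides V: subpolygons Q all of whose
  edges are edges of V or lie in E, and which contain no diagonal of E as an internal diagonal.\<close>
definition cells :: "nat set \<Rightarrow> nat set set \<Rightarrow> nat set set" where
  "cells V E = {Q. Q \<subseteq> V \<and> 3 \<le> card Q \<and> (\<forall>e. is_edge Q e \<longrightarrow> is_edge V e \<or> e \<in> E) \<and>
      (\<forall>e\<in>E. e \<notin> internal_diag Q)}"

end

theory Submission
  imports Defs
begin

(* Only the gluing direction needs an argument: if f is a frieze on every cell, it is one on V.
   Induct on the number of diagonals of E and cut V along one of them, {p, q}; by induction f is a
   frieze on both halves.  A Ptolemy relation between crossing diagonals one of which lies in a half
   is reached from the relations across {p, q} by pentagon exchanges: in a pentagon, the two relations
   at one diagonal together with one further relation imply the others, after cancelling a common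
   factor, which needs inverses in K.  Two diagonals that both cross {p, q} are related through the
   pentagon they span with p. *)

lemma crosses_iff:
  "crosses {a, b} {c, d} \<longleftrightarrow>
     (a < c \<and> c < b \<and> b < d) \<or> (b < c \<and> c < a \<and> a < d) \<or>
     (a < d \<and> d < b \<and> b < c) \<or> (b < d \<and> d < a \<and> a < c) \<or>
     (c < a \<and> a < d \<and> d < b) \<or> (d < a \<and> a < c \<and> c < b) \<or>
     (c < b \<and> b < d \<and> d < a) \<or> (d < b \<and> b < c \<and> c < a)"
  unfolding crosses_def doubleton_eq_iff by (auto; blast)

lemma crosses_commute: "crosses e e' \<longleftrightarrow> crosses e' e"
  unfolding crosses_def by blast

lemma crosses_distinct:
  "crosses {a, b} {c, d} \<Longrightarrow> distinct [a, b, c, d]"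
  unfolding crosses_iff by auto

lemma crosses_rotate:
  fixes a b c d q M :: nat
  assumes "a < M" "b < M" "c < M" "d < M"
  defines "r \<equiv> \<lambda>x. if q \<le> x then x else x + M"
  shows "crosses {r a, r b} {r c, r d} \<longleftrightarrow> crosses {a, b} {c, d}"
  using assms(1-4) unfolding crosses_iff r_def by (auto split: if_splits)

lemma doubleton_mem_diag_iff: "{a, b} \<in> diag V \<longleftrightarrow> a \<in> V \<and> b \<in> V \<and> a \<noteq> b"
  unfolding diag_def by (auto simp: doubleton_eq_iff)

lemma ptolemy_swap:
  fixes f :: "nat set \<Rightarrow> 'k::semifield"
  shows ptolemy_swap_left: "ptolemy f a b c d \<longleftrightarrow> ptolemy f b a c d"
    and ptolemy_swap_right: "ptolemy f a b c d \<longleftrightarrow> ptolemy f a b d c"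
    and ptolemy_swap_pairs: "ptolemy f a b c d \<longleftrightarrow> ptolemy f c d a b"
  unfolding ptolemy_def by (auto simp: insert_commute ac_simps)

lemma semifield_mult_right_cancel:
  fixes x y k :: "'k::semifield"
  assumes "x * k = y * k"
  shows "x = y"
proof -
  have "x = x * k * inverse k" by (simp add: mult.assoc semifield_right_inverse)
  also have "\<dots> = y * k * inverse k" using assms by simp
  also have "\<dots> = y" by (simp add: mult.assoc semifield_right_inverse)
  finally show ?thesis .
qed

(* The vertices u, a, e, w, b, in this cyclic order, form a pentagon. *)
lemma ptolemy_pentagon:
  fixes f :: "nat set \<Rightarrow> 'k::semifield"
  assumes ue_aw: "ptolemy f u e a w" and eb_uw: "ptolemy f e b u w" and ab_uw: "ptolemy f a b u w"
  shows "ptolemy f a b u e"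
proof -
  have "f {a, b} * f {u, e} * f {u, w} = (f {a, u} * f {b, w} + f {a, w} * f {b, u}) * f {u, e}"
    using ab_uw unfolding ptolemy_def by (metis mult.assoc mult.commute)
  also have "\<dots> = f {a, u} * f {b, w} * f {u, e} + f {b, u} * (f {u, e} * f {a, w})"
    by (simp add: algebra_simps)
  also have "\<dots> = f {a, u} * f {b, w} * f {u, e} + f {b, u} * (f {u, a} * f {e, w} + f {u, w} * f {e, a})"
    using ue_aw unfolding ptolemy_def by simp
  also have "\<dots> = f {a, u} * (f {e, u} * f {b, w} + f {e, w} * f {b, u}) + f {a, e} * f {b, u} * f {u, w}"
    by (simp add: algebra_simps insert_commute)
  also have "\<dots> = f {a, u} * (f {e, b} * f {u, w}) + f {a, e} * f {b, u} * f {u, w}"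
    using eb_uw unfolding ptolemy_def by simp
  also have "\<dots> = (f {a, u} * f {b, e} + f {a, e} * f {b, u}) * f {u, w}"
    by (simp add: algebra_simps insert_commute)
  finally show ?thesis
    unfolding ptolemy_def by (rule semifield_mult_right_cancel)
qed

lemma weak_frieze_ptolemy:
  assumes "weak_frieze V D f" "a \<in> V" "b \<in> V" "c \<in> V" "d \<in> V"
    and "crosses {a, b} {c, d}" "{a, b} \<in> D \<or> {c, d} \<in> D"
  shows "ptolemy f a b c d"
  using assms crosses_commute ptolemy_swap_pairs unfolding weak_frieze_def by metis

lemma weak_frieze_antimono:
  "weak_frieze V D f \<Longrightarrow> W \<subseteq> V \<Longrightarrow> D' \<subseteq> D \<Longrightarrow> weak_frieze W D' f"
  unfolding weak_frieze_def by blast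

lemma weak_frieze_Un:
  "weak_frieze V (D \<union> D') f \<longleftrightarrow> weak_frieze V D f \<and> weak_frieze V D' f"
  unfolding weak_frieze_def by blast

lemma frieze_iff_weak_frieze_UNIV: "frieze V f \<longleftrightarrow> weak_frieze V UNIV f"
  unfolding frieze_def weak_frieze_def by blast

lemma frieze_subset: "frieze V f \<Longrightarrow> W \<subseteq> V \<Longrightarrow> frieze W f"
  unfolding frieze_def by blast

lemma frieze_cong:
  assumes "\<And>e. e \<in> diag V \<Longrightarrow> f e = g e"
  shows "frieze V f \<longleftrightarrow> frieze V g"
proof -
  have "ptolemy f a b c d \<longleftrightarrow> ptolemy g a b c d"
    if "a \<in> V" "b \<in> V" "c \<in> V" "d \<in> V" "crosses {a, b} {c, d}" for a b c d
    using that crosses_distinct[OF that(5)] assms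
    unfolding ptolemy_def by (simp add: doubleton_mem_diag_iff)
  then show ?thesis unfolding frieze_def by blast
qed

lemma weak_frieze_relabel:
  fixes f :: "nat set \<Rightarrow> 'k::semifield"
  assumes inverse: "\<And>x. x \<in> V \<Longrightarrow> g (r x) = x"
    and crosses: "\<And>a b c d. a \<in> V \<Longrightarrow> b \<in> V \<Longrightarrow> c \<in> V \<Longrightarrow> d \<in> V \<Longrightarrow>
        crosses {r a, r b} {r c, r d} \<longleftrightarrow> crosses {a, b} {c, d}"
    and diagonals: "\<And>c d. c \<in> V \<Longrightarrow> d \<in> V \<Longrightarrow> {r c, r d} \<in> D' \<longleftrightarrow> {c, d} \<in> D"
  shows "weak_frieze (r ` V) D' (\<lambda>S. f (g ` S)) \<longleftrightarrow> weak_frieze V D f"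
proof -
  have "ptolemy (\<lambda>S. f (g ` S)) (r a) (r b) (r c) (r d) \<longleftrightarrow> ptolemy f a b c d"
    if "a \<in> V" "b \<in> V" "c \<in> V" "d \<in> V" for a b c d
    using that by (simp add: ptolemy_def inverse)
  moreover have "weak_frieze (r ` V) D' h \<longleftrightarrow> (\<forall>a\<in>V. \<forall>b\<in>V. \<forall>c\<in>V. \<forall>d\<in>V.
      crosses {r a, r b} {r c, r d} \<longrightarrow> {r c, r d} \<in> D' \<longrightarrow> ptolemy h (r a) (r b) (r c) (r d))"
    for h :: "nat set \<Rightarrow> 'k"
    unfolding weak_frieze_def by blast
  ultimately show ?thesis
    using crosses diagonals unfolding weak_frieze_def by auto
qed

corollary frieze_relabel:
  fixes f :: "nat set \<Rightarrow> 'k::semifield"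
  assumes "\<And>x. x \<in> V \<Longrightarrow> g (r x) = x"
    and "\<And>a b c d. a \<in> V \<Longrightarrow> b \<in> V \<Longrightarrow> c \<in> V \<Longrightarrow> d \<in> V \<Longrightarrow>
        crosses {r a, r b} {r c, r d} \<longleftrightarrow> crosses {a, b} {c, d}"
  shows "frieze (r ` V) (\<lambda>S. f (g ` S)) \<longleftrightarrow> frieze V f"
  unfolding frieze_iff_weak_frieze_UNIV using assms by (intro weak_frieze_relabel) auto

definition inner_arc :: "nat set \<Rightarrow> nat \<Rightarrow> nat \<Rightarrow> nat set" where
  "inner_arc V p q = {x \<in> V. p \<le> x \<and> x \<le> q}"

definition outer_arc :: "nat set \<Rightarrow> nat \<Rightarrow> nat \<Rightarrow> nat set" where
  "outer_arc V p q = {x \<in> V. x \<le> p \<or> q \<le> x}"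

lemma weak_frieze_inner_arc_diag:
  fixes f :: "nat set \<Rightarrow> 'k::semifield"
  assumes "p < q" "p \<in> V" "q \<in> V"
    and inner: "frieze (inner_arc V p q) f"
    and across: "weak_frieze V {{p, q}} f"
  shows "weak_frieze V (diag (inner_arc V p q)) f"
proof -
  have inner_ptolemy: "ptolemy f a b c e"
    if "a \<in> V" "b \<in> V" "c \<in> V" "e \<in> V" "crosses {a, b} {c, e}"
      "p \<le> a" "a \<le> q" "p \<le> b" "b \<le> q" "p \<le> c" "c \<le> q" "p \<le> e" "e \<le> q" for a b c e
    using inner that unfolding frieze_def inner_arc_def by blast
  (* The relation for {c, e} is reached from the one for {p, q} by first moving p to c and then
     q to e, each move being a pentagon exchange. *)
  have from_outside: "ptolemy f a b c e"
    if "a \<in> V" "b \<in> V" "c \<in> V" "e \<in> V" "p \<le> c" "c < a" "a < e" "e \<le> q" "b < p \<or> q < b"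
    for a b c e
  proof -
    have across_b: "ptolemy f x b p q" if "x \<in> V" "p < x" "x < q" for x
      using weak_frieze_ptolemy[OF across] that \<open>b \<in> V\<close> \<open>p \<in> V\<close> \<open>q \<in> V\<close> \<open>b < p \<or> q < b\<close>
      by (auto simp: crosses_iff)
    have from_left: "ptolemy f x b c q" if "x \<in> V" "c < x" "x < q" for x
    proof (cases "c = p")
      case True
      then show ?thesis using across_b that by simp
    next
      case False
      have "ptolemy f q c x p"
        using inner_ptolemy that \<open>c \<in> V\<close> \<open>p \<in> V\<close> \<open>q \<in> V\<close> False \<open>p \<le> c\<close>
        by (simp add: crosses_iff)
      moreover have "ptolemy f c b q p" "ptolemy f x b q p"
        using across_b that \<open>c \<in> V\<close> \<open>p \<le> c\<close> \<open>c < a\<close> \<open>a < e\<close> \<open>e \<le> q\<close> False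
        by (simp_all add: ptolemy_swap_right[of f _ _ q])
      ultimately show ?thesis
        using ptolemy_pentagon ptolemy_swap_right by metis
    qed
    show ?thesis
    proof (cases "e = q")
      case True
      then show ?thesis using from_left that by simp
    next
      case False
      have "ptolemy f c e a q"
        using inner_ptolemy that \<open>p < q\<close> \<open>q \<in> V\<close> False by (simp add: crosses_iff)
      moreover have "ptolemy f e b c q" "ptolemy f a b c q"
        using from_left that False by simp_all
      ultimately show ?thesis by (rule ptolemy_pentagon)
    qed
  qed
  show ?thesis
    unfolding weak_frieze_def
  proof (intro allI impI)
    fix a b c e
    assume abce: "a \<in> V" "b \<in> V" "c \<in> V" "e \<in> V" and cross: "crosses {a, b} {c, e}"
      and "{c, e} \<in> diag (inner_arc V p q)"
    then have ce: "p \<le> c" "c \<le> q" "p \<le> e" "e \<le> q"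
      by (auto simp: doubleton_mem_diag_iff inner_arc_def)
    consider "p \<le> a" "a \<le> q" "p \<le> b" "b \<le> q"
      | "c < a" "a < e" "b < p \<or> q < b" | "e < a" "a < c" "b < p \<or> q < b"
      | "c < b" "b < e" "a < p \<or> q < a" | "e < b" "b < c" "a < p \<or> q < a"
      using cross ce unfolding crosses_iff by linarith
    then show "ptolemy f a b c e"
    proof cases
      case 1
      then show ?thesis using inner_ptolemy abce cross ce by blast
    next
      case 2
      then show ?thesis using from_outside abce ce by blast
    next
      case 3
      then show ?thesis using from_outside[of a b e c] abce ce ptolemy_swap_right by blast
    next
      case 4
      then show ?thesis using from_outside[of b a c e] abce ce ptolemy_swap_left by blast
    next
      case 5
      then show ?thesis using from_outside[of b a e c] abce ce ptolemy_swap_left ptolemy_swap_right by blast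
    qed
  qed
qed

lemma weak_frieze_outer_arc_diag:
  fixes f :: "nat set \<Rightarrow> 'k::semifield"
  assumes "finite V" "p < q" "p \<in> V" "q \<in> V"
    and outer: "frieze (outer_arc V p q) f"
    and across: "weak_frieze V {{p, q}} f"
  shows "weak_frieze V (diag (outer_arc V p q)) f"
proof -
  (* Relabel cyclically so that q comes first: the outer arc from q round to p becomes the
     inner arc from q to p + M. *)
  define M where "M = Suc (Max V)"
  define r where "r x = (if q \<le> x then x else x + M)" for x
  define g where "g y = (if M \<le> y then y - M else y)" for y
  define f' where "f' S = f (g ` S)" for S
  have below_M: "x < M" if "x \<in> V" for x
    using \<open>finite V\<close> that unfolding M_def by (simp add: le_imp_less_Suc)
  have g_r: "g (r x) = x" if "x \<in> V" for x
    using below_M[OF that] unfolding r_def g_def by auto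
  have r_crosses: "crosses {r a, r b} {r c, r d} \<longleftrightarrow> crosses {a, b} {c, d}"
    if "a \<in> V" "b \<in> V" "c \<in> V" "d \<in> V" for a b c d
    unfolding r_def using crosses_rotate below_M that by blast
  have r_eq_iff: "r x = r y \<longleftrightarrow> x = y" if "x \<in> V" "y \<in> V" for x y
    using g_r that by metis
  have r_pq: "r p = p + M" "r q = q"
    using \<open>p < q\<close> unfolding r_def by auto
  have r_arc: "r x \<in> inner_arc (r ` V) q (p + M) \<longleftrightarrow> x \<in> outer_arc V p q" if "x \<in> V" for x
    using that below_M[OF that] below_M[OF \<open>q \<in> V\<close>] \<open>p < q\<close>
    unfolding inner_arc_def outer_arc_def r_def by auto
  have "r ` outer_arc V p q = inner_arc (r ` V) q (p + M)"
    using r_arc unfolding inner_arc_def outer_arc_def by auto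
  moreover have "frieze (r ` outer_arc V p q) f'"
    unfolding f'_def using outer g_r r_crosses by (subst frieze_relabel) (auto simp: outer_arc_def)
  ultimately have "frieze (inner_arc (r ` V) q (p + M)) f'"
    by simp
  moreover have "weak_frieze (r ` V) {{q, p + M}} f'"
    unfolding f'_def
  proof (subst weak_frieze_relabel)
    show "{r c, r d} \<in> {{q, p + M}} \<longleftrightarrow> {c, d} \<in> {{p, q}}" if "c \<in> V" "d \<in> V" for c d
      using that r_eq_iff[OF _ \<open>p \<in> V\<close>] r_eq_iff[OF _ \<open>q \<in> V\<close>] r_pq
      by (auto simp: doubleton_eq_iff)
  qed (use g_r r_crosses across in auto)
  moreover have "p + M \<in> r ` V" "q \<in> r ` V"
    using r_pq \<open>p \<in> V\<close> \<open>q \<in> V\<close> by (metis image_eqI)+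
  moreover have "q < p + M"
    using below_M[OF \<open>q \<in> V\<close>] by simp
  ultimately have "weak_frieze (r ` V) (diag (inner_arc (r ` V) q (p + M))) f'"
    using weak_frieze_inner_arc_diag by blast
  then show ?thesis
    unfolding f'_def
  proof (subst (asm) weak_frieze_relabel)
    show "{r c, r d} \<in> diag (inner_arc (r ` V) q (p + M)) \<longleftrightarrow> {c, d} \<in> diag (outer_arc V p q)"
      if "c \<in> V" "d \<in> V" for c d
      using that r_arc r_eq_iff by (auto simp: doubleton_mem_diag_iff)
  qed (use g_r r_crosses in auto)
qed

lemma frieze_if_weak_frieze_arc_diags:
  fixes f :: "nat set \<Rightarrow> 'k::semifield"
  assumes "p < q" "p \<in> V" "q \<in> V"
    and arcs: "weak_frieze V (diag (inner_arc V p q) \<union> diag (outer_arc V p q)) f"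
  shows "frieze V f"
proof -
  note arc_ptolemy = weak_frieze_ptolemy[OF arcs]
  (* Two diagonals crossing {p, q} are related through the pentagon p, a, c, b, e. *)
  have ordered: "ptolemy f a b c e"
    if abce: "a \<in> V" "b \<in> V" "c \<in> V" "e \<in> V" and cross: "crosses {a, b} {c, e}"
      and "p < a" "a < c" "c < q" "b < p \<or> q < b" "e < p \<or> q < e" for a b c e
  proof -
    have b_before_e: "(q < b \<and> (b < e \<or> e < p)) \<or> (b < e \<and> e < p)"
      using cross that unfolding crosses_iff by auto
    have "{c, p} \<in> diag (inner_arc V p q)" "{b, p} \<in> diag (outer_arc V p q)"
      using that \<open>p \<in> V\<close> by (auto simp: doubleton_mem_diag_iff inner_arc_def outer_arc_def)
    moreover have "crosses {b, a} {c, p}" "crosses {a, e} {b, p}" "crosses {c, e} {b, p}"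
      using b_before_e that unfolding crosses_iff by auto
    ultimately have "ptolemy f b a c p" "ptolemy f a e b p" "ptolemy f c e b p"
      using arc_ptolemy abce \<open>p \<in> V\<close> by blast+
    then have "ptolemy f c e b a"
      by (rule ptolemy_pentagon)
    then show ?thesis
      using ptolemy_swap by metis
  qed
  have straddling: "ptolemy f a b c e"
    if "a \<in> V" "b \<in> V" "c \<in> V" "e \<in> V" and cross: "crosses {a, b} {c, e}"
      and "p < a" "a < q" "b < p \<or> q < b" "p < c" "c < q" "e < p \<or> q < e" for a b c e
  proof (cases "a < c")
    case True
    then show ?thesis using ordered that by blast
  next
    case False
    then have "c < a"
      using crosses_distinct[OF cross] by simp
    moreover have "crosses {c, e} {a, b}"
      using cross crosses_commute by blast
    ultimately have "ptolemy f c e a b"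
      using ordered that by blast
    then show ?thesis
      using ptolemy_swap_pairs by blast
  qed
  let ?arc_diags = "diag (inner_arc V p q) \<union> diag (outer_arc V p q)"
  have straddle: "(p < x \<and> x < q \<and> (y < p \<or> q < y)) \<or> (p < y \<and> y < q \<and> (x < p \<or> q < x))"
    if "x \<in> V" "y \<in> V" "x \<noteq> y" "{x, y} \<notin> ?arc_diags" for x y
    using that by (simp add: doubleton_mem_diag_iff inner_arc_def outer_arc_def) linarith
  show ?thesis
    unfolding frieze_def
  proof (intro allI impI)
    fix a b c e
    assume abce: "a \<in> V" "b \<in> V" "c \<in> V" "e \<in> V" and cross: "crosses {a, b} {c, e}"
    show "ptolemy f a b c e"
    proof (cases "{a, b} \<in> ?arc_diags \<or> {c, e} \<in> ?arc_diags")
      case True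
      then show ?thesis using arc_ptolemy abce cross by blast
    next
      case False
      then have ab: "(p < a \<and> a < q \<and> (b < p \<or> q < b)) \<or> (p < b \<and> b < q \<and> (a < p \<or> q < a))"
        and ce: "(p < c \<and> c < q \<and> (e < p \<or> q < e)) \<or> (p < e \<and> e < q \<and> (c < p \<or> q < c))"
        using straddle abce crosses_distinct[OF cross] by auto
      have cross': "crosses {b, a} {c, e}" "crosses {a, b} {e, c}" "crosses {b, a} {e, c}"
        using cross by (simp_all add: insert_commute)
      from ab ce consider
          "p < a \<and> a < q \<and> (b < p \<or> q < b)" "p < c \<and> c < q \<and> (e < p \<or> q < e)"
        | "p < a \<and> a < q \<and> (b < p \<or> q < b)" "p < e \<and> e < q \<and> (c < p \<or> q < c)"
        | "p < b \<and> b < q \<and> (a < p \<or> q < a)" "p < c \<and> c < q \<and> (e < p \<or> q < e)"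
        | "p < b \<and> b < q \<and> (a < p \<or> q < a)" "p < e \<and> e < q \<and> (c < p \<or> q < c)"
        by blast
      then show ?thesis
      proof cases
        case 1
        then show ?thesis using straddling abce cross by blast
      next
        case 2
        then have "ptolemy f a b e c" using straddling abce cross' by blast
        then show ?thesis using ptolemy_swap_right by blast
      next
        case 3
        then have "ptolemy f b a c e" using straddling abce cross' by blast
        then show ?thesis using ptolemy_swap_left by blast
      next
        case 4
        then have "ptolemy f b a e c" using straddling abce cross' by blast
        then show ?thesis using ptolemy_swap_left ptolemy_swap_right by blast
      qed
    qed
  qed
qed

lemma is_edge_inner_arc:
  assumes "finite V" "p < q" "p \<in> V" "q \<in> V" and edge: "is_edge (inner_arc V p q) e"
  shows "is_edge V e \<or> e = {p, q}"
proof -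
  let ?W = "inner_arc V p q"
  have "Min ?W = p" "Max ?W = q"
    using assms(1-4) by (auto simp: inner_arc_def intro!: Min_eqI Max_eqI)
  moreover obtain a b where ab: "a \<in> ?W" "b \<in> ?W" "a < b" "e = {a, b}"
    and "(\<forall>x\<in>?W. \<not> (a < x \<and> x < b)) \<or> (a = Min ?W \<and> b = Max ?W)"
    using edge unfolding is_edge_def by blast
  moreover have "\<forall>x\<in>V. \<not> (a < x \<and> x < b)" if "\<forall>x\<in>?W. \<not> (a < x \<and> x < b)"
    using that ab by (force simp: inner_arc_def)
  ultimately show ?thesis
    using ab unfolding is_edge_def by (auto simp: inner_arc_def)
qed

lemma is_edge_outer_arc:
  assumes "finite V" "p < q" "p \<in> V" "q \<in> V" and edge: "is_edge (outer_arc V p q) e"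
  shows "is_edge V e \<or> e = {p, q}"
proof -
  let ?W = "outer_arc V p q"
  have "V \<noteq> {}"
    using \<open>p \<in> V\<close> by blast
  have "Min ?W = Min V" "Max ?W = Max V"
    using assms(1-4) Min_le[OF \<open>finite V\<close> \<open>p \<in> V\<close>] Max_ge[OF \<open>finite V\<close> \<open>q \<in> V\<close>]
      Min_in[OF \<open>finite V\<close> \<open>V \<noteq> {}\<close>] Max_in[OF \<open>finite V\<close> \<open>V \<noteq> {}\<close>]
    by (auto simp: outer_arc_def intro!: Min_eqI Max_eqI)
  moreover obtain a b where ab: "a \<in> ?W" "b \<in> ?W" "a < b" "e = {a, b}"
    and "(\<forall>x\<in>?W. \<not> (a < x \<and> x < b)) \<or> (a = Min ?W \<and> b = Max ?W)"
    using edge unfolding is_edge_def by blast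
  moreover have "(\<forall>x\<in>V. \<not> (a < x \<and> x < b)) \<or> (a = p \<and> b = q)"
    if gap: "\<forall>x\<in>?W. \<not> (a < x \<and> x < b)"
  proof (cases "\<exists>x\<in>V. a < x \<and> x < b")
    case True
    then obtain x where "x \<in> V" "a < x" "x < b" by blast
    then have "p < x" "x < q"
      using gap by (auto simp: outer_arc_def)
    then have "a \<le> p" "q \<le> b"
      using ab(1,2) \<open>a < x\<close> \<open>x < b\<close> by (auto simp: outer_arc_def)
    moreover have "p \<in> ?W" "q \<in> ?W"
      using \<open>p \<in> V\<close> \<open>q \<in> V\<close> by (auto simp: outer_arc_def)
    ultimately have "a = p \<and> b = q"
      using gap \<open>a < x\<close> \<open>x < b\<close> \<open>p < x\<close> \<open>x < q\<close> by force
    then show ?thesis ..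
  qed simp
  ultimately show ?thesis
    using ab unfolding is_edge_def by (auto simp: outer_arc_def)
qed

lemma is_edge_if_subset_inner_arc:
  assumes "finite V" "Q \<subseteq> inner_arc V p q" "p \<in> Q" "q \<in> Q" "p < q"
  shows "is_edge Q {p, q}"
proof -
  have "finite Q"
    by (rule finite_subset[OF assms(2)]) (simp add: inner_arc_def assms(1))
  moreover have "\<forall>x\<in>Q. p \<le> x \<and> x \<le> q"
    using assms(2) by (auto simp: inner_arc_def)
  ultimately have "Min Q = p" "Max Q = q"
    using assms(3,4) by (simp_all add: Min_eqI Max_eqI)
  then show ?thesis
    using assms(3-5) unfolding is_edge_def by blast
qed

lemma is_edge_if_subset_outer_arc:
  assumes "Q \<subseteq> outer_arc V p q" "p \<in> Q" "q \<in> Q" "p < q"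
  shows "is_edge Q {p, q}"
proof -
  have "\<forall>x\<in>Q. \<not> (p < x \<and> x < q)"
    using assms(1) unfolding outer_arc_def by auto
  then show ?thesis
    using assms(2-4) unfolding is_edge_def by blast
qed

lemma dissection_restrict:
  assumes "dissection V E" and edges: "\<And>e. is_edge W e \<Longrightarrow> is_edge V e \<or> e = d"
  shows "dissection W ({e \<in> E. e \<subseteq> W} - {d})"
proof -
  have "e \<in> internal_diag W" if "e \<in> internal_diag V" "e \<subseteq> W" "e \<noteq> d" for e
    using that edges unfolding internal_diag_def diag_def by auto
  then show ?thesis
    using assms(1) unfolding dissection_def by auto
qed

lemma cells_restrict_subset:
  assumes "d \<in> E" "W \<subseteq> V"
    and edges: "\<And>e. is_edge W e \<Longrightarrow> is_edge V e \<or> e = d"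
    and edge_d: "\<And>Q. Q \<subseteq> W \<Longrightarrow> d \<subseteq> Q \<Longrightarrow> is_edge Q d"
  shows "cells W ({e \<in> E. e \<subseteq> W} - {d}) \<subseteq> cells V E"
proof
  fix Q
  assume "Q \<in> cells W ({e \<in> E. e \<subseteq> W} - {d})"
  then have Q: "Q \<subseteq> W" "3 \<le> card Q"
    and Q_edges: "\<And>e. is_edge Q e \<Longrightarrow> is_edge W e \<or> e \<in> E \<and> e \<subseteq> W \<and> e \<noteq> d"
    and Q_internal: "\<And>e. e \<in> E \<Longrightarrow> e \<subseteq> W \<Longrightarrow> e \<noteq> d \<Longrightarrow> e \<notin> internal_diag Q"
    unfolding cells_def by auto
  have "e \<notin> internal_diag Q" if "e \<in> E" for e
  proof (cases "e = d \<or> e \<subseteq> W")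
    case True
    then show ?thesis
      using Q_internal[OF that] edge_d[OF Q(1)] unfolding internal_diag_def diag_def by auto
  next
    case False
    then show ?thesis
      using Q(1) unfolding internal_diag_def diag_def by auto
  qed
  then show "Q \<in> cells V E"
    using Q Q_edges edges \<open>d \<in> E\<close> \<open>W \<subseteq> V\<close> unfolding cells_def by blast
qed


lemma frieze_if_cells_frieze:
  fixes f :: "nat set \<Rightarrow> 'k::semifield"
  assumes "polygon V" "dissection V E" "\<forall>Q\<in>cells V E. frieze Q f" "weak_frieze V E f"
  shows "frieze V f"
  using assms
proof (induction "card E" arbitrary: V E rule: less_induct)
  case less
  have "finite V" "3 \<le> card V"
    using \<open>polygon V\<close> unfolding polygon_def by auto
  show ?case
  proof (cases "E = {}")
    case True
    then have "V \<in> cells V E"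
      using \<open>3 \<le> card V\<close> unfolding cells_def by simp
    then show ?thesis
      using less.prems(3) by blast
  next
    case False
    then obtain d where "d \<in> E" by blast
    then have "d \<in> internal_diag V"
      using \<open>dissection V E\<close> unfolding dissection_def by blast
    then obtain a b where "a \<in> V" "b \<in> V" "a \<noteq> b" "d = {a, b}" and "\<not> is_edge V d"
      unfolding internal_diag_def diag_def by blast
    then obtain p q where pq: "p < q" "p \<in> V" "q \<in> V" "d = {p, q}"
      by (metis insert_commute linorder_neqE_nat)
    with \<open>\<not> is_edge V d\<close>
    obtain x y where x: "x \<in> V" "p < x" "x < q" and y: "y \<in> V" "y < p \<or> q < y"
      unfolding is_edge_def using \<open>finite V\<close> by (metis Max_eqI Min_eqI linorder_not_le)
    have "finite E"
      using \<open>dissection V E\<close> \<open>finite V\<close> finite_subset[of E "Pow V"]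
      unfolding dissection_def internal_diag_def diag_def by auto
    have side: "frieze W f"
      if "W \<subseteq> V" "{p, x, q} \<subseteq> W \<or> {p, y, q} \<subseteq> W"
        and edges: "\<And>e. is_edge W e \<Longrightarrow> is_edge V e \<or> e = d"
        and edge_d: "\<And>Q. Q \<subseteq> W \<Longrightarrow> d \<subseteq> Q \<Longrightarrow> is_edge Q d" for W
    proof (rule less.hyps)
      let ?E = "{e \<in> E. e \<subseteq> W} - {d}"
      show "card ?E < card E"
        using \<open>finite E\<close> \<open>d \<in> E\<close> by (intro psubset_card_mono) auto
      have "finite W"
        using \<open>W \<subseteq> V\<close> \<open>finite V\<close> finite_subset by blast
      moreover have "card {p, x, q} = 3" "card {p, y, q} = 3"
        using pq x y by auto
      ultimately show "polygon W"
        unfolding polygon_def using that(2) by (metis card_mono)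
      show "dissection W ?E"
        using \<open>dissection V E\<close> edges by (rule dissection_restrict)
      show "\<forall>Q\<in>cells W ?E. frieze Q f"
        using cells_restrict_subset[OF \<open>d \<in> E\<close> \<open>W \<subseteq> V\<close> edges edge_d] less.prems(3) by blast
      show "weak_frieze W ?E f"
        using \<open>weak_frieze V E f\<close> \<open>W \<subseteq> V\<close> by (rule weak_frieze_antimono) blast
    qed
    have "frieze (inner_arc V p q) f"
      using x pq is_edge_inner_arc[OF \<open>finite V\<close> pq(1-3)] is_edge_if_subset_inner_arc[OF \<open>finite V\<close>]
      by (intro side) (auto simp: inner_arc_def)
    moreover have "frieze (outer_arc V p q) f"
      using y pq is_edge_outer_arc[OF \<open>finite V\<close> pq(1-3)] is_edge_if_subset_outer_arc
      by (intro side) (auto simp: outer_arc_def)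
    moreover have "weak_frieze V {{p, q}} f"
      using \<open>weak_frieze V E f\<close> order_refl by (rule weak_frieze_antimono) (use \<open>d \<in> E\<close> pq(4) in auto)
    ultimately have "weak_frieze V (diag (inner_arc V p q) \<union> diag (outer_arc V p q)) f"
      unfolding weak_frieze_Un
      using weak_frieze_inner_arc_diag[OF pq(1-3)] weak_frieze_outer_arc_diag[OF \<open>finite V\<close> pq(1-3)]
      by blast
    then show ?thesis
      by (rule frieze_if_weak_frieze_arc_diags[OF pq(1-3)])
  qed
qed

theorem theoremC:
  fixes V :: "nat set" and E :: "nat set set"
    and Ds :: "nat set \<Rightarrow> nat set set"
    and fs :: "nat set \<Rightarrow> nat set \<Rightarrow> 'k::semifield"
    and f :: "nat set \<Rightarrow> 'k"
  assumes "polygon V"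
    and "dissection V E"
    and "\<forall>Q\<in>cells V E. dissection Q (Ds Q)"
    and "\<forall>Q\<in>cells V E. weak_frieze Q (Ds Q) (fs Q)"
    and "\<forall>Q\<in>cells V E. \<forall>Q'\<in>cells V E. \<forall>d\<in>diag Q \<inter> diag Q'. fs Q d = fs Q' d"
    and "weak_frieze V (E \<union> \<Union>(Ds ` cells V E)) f"
    and "\<forall>Q\<in>cells V E. \<forall>d\<in>diag Q. f d = fs Q d"
  shows "frieze V f \<longleftrightarrow> (\<forall>Q\<in>cells V E. frieze Q (fs Q))"
proof -
  have cell_subset: "Q \<subseteq> V" if "Q \<in> cells V E" for Q
    using that unfolding cells_def by blast
  have cell_agrees: "frieze Q (fs Q) \<longleftrightarrow> frieze Q f" if "Q \<in> cells V E" for Q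
    using assms(7) that by (intro frieze_cong) auto
  show ?thesis
  proof
    assume "frieze V f"
    then show "\<forall>Q\<in>cells V E. frieze Q (fs Q)"
      using cell_subset cell_agrees frieze_subset by blast
  next
    assume "\<forall>Q\<in>cells V E. frieze Q (fs Q)"
    then have "\<forall>Q\<in>cells V E. frieze Q f"
      using cell_agrees by blast
    moreover have "weak_frieze V E f"
      using assms(6) order_refl by (rule weak_frieze_antimono) blast
    ultimately show "frieze V f"
      using assms(1,2) frieze_if_cells_frieze by blast
  qed
qed

end
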